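(* Let $X$ be a real Banach space and $C$ a weakly compact subset of $X$. Then the triplet $(X,C,\mathcal{CB}(X))$ has weak-$\mathscr{F}_{cmc}$-SACP, where $\mathcal{CB}(X)$ is the family of all nonempty closed bounded subsets of $X$ and $\mathscr{F}_{cmc}$ is the class of all convex, monotone, coercive functions $f:\ell_\infty^+(F)\to[0,\infty)$, $F\in\mathcal{CB}(X)$.
   Context: For a nonempty closed bounded set $F\subseteq X$, $\ell_\infty^+(F)$ is the set of bounded functions $\varphi:F\to[0,\infty)$ with the coordinatewise order and sup norm. $f$ is monotone if $\varphi_1\le\varphi_2$ implies $f(\varphi_1)\le f(\varphi_2)$, coercive if $f(\varphi)\to\infty$ as $\|\varphi\|_\infty\to\infty$. $r_f(x,F)=f((\|x-a\|)_{a\in F})$, $\mathrm{rad}_V^f(F)=\inf_{v\in V}r_f(v,F)$. $(X,V,\mathfrak{F})$ has weak-$\mathscr{F}$-SACP if for every $F\in\mathfrak{F}$, every $f\in\mathscr{F}$ on $\ell_\infty^+(F)$ and every sequence $(v_n)\subseteq V$ with $r_f(v_n,F)\to\mathrm{rad}_V^f(F)$, $(v_n)$ has a weakly convergent subsequence. *)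

theory Defs
  imports "HOL-Analysis.Analysis"
begin

definition weak_topology :: "'a::real_normed_vector topology" where
  "weak_topology = topology_generated_by
     {{x. l x \<in> U} | (l :: 'a \<Rightarrow> real) U. bounded_linear l \<and> open U}"

definition weakly_compact :: "'a::real_normed_vector set \<Rightarrow> bool" where
  "weakly_compact C \<longleftrightarrow> compactin weak_topology C"

definition weakly_tendsto :: "(nat \<Rightarrow> 'a::real_normed_vector) \<Rightarrow> 'a \<Rightarrow> bool" where
  "weakly_tendsto v x \<longleftrightarrow>
     (\<forall>l :: 'a \<Rightarrow> real. bounded_linear l \<longrightarrow> (\<lambda>n. l (v n)) \<longlonglongrightarrow> l x)"

definition CB :: "'a::real_normed_vector set set" where
  "CB = {F. F \<noteq> {} \<and> closed F \<and> bounded F}"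

text \<open>ell_infty^+(F), elements represented as functions vanishing outside F.\<close>
definition linf_plus :: "'a set \<Rightarrow> ('a \<Rightarrow> real) set" where
  "linf_plus F = {\<phi>. (\<forall>a\<in>F. 0 \<le> \<phi> a) \<and> bdd_above (\<phi> ` F) \<and> (\<forall>a. a \<notin> F \<longrightarrow> \<phi> a = 0)}"

definition sup_norm :: "'a set \<Rightarrow> ('a \<Rightarrow> real) \<Rightarrow> real" where
  "sup_norm F \<phi> = (SUP a\<in>F. \<bar>\<phi> a\<bar>)"

definition F_cmc :: "'a set \<Rightarrow> (('a \<Rightarrow> real) \<Rightarrow> real) set" where
  "F_cmc F = {f.
     (\<forall>\<phi>\<in>linf_plus F. 0 \<le> f \<phi>) \<and>
     (\<forall>\<phi>1\<in>linf_plus F. \<forall>\<phi>2\<in>linf_plus F. \<forall>t::real. 0 \<le> t \<and> t \<le> 1 \<longrightarrow>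
        f (\<lambda>a. t * \<phi>1 a + (1 - t) * \<phi>2 a) \<le> t * f \<phi>1 + (1 - t) * f \<phi>2) \<and>
     (\<forall>\<phi>1\<in>linf_plus F. \<forall>\<phi>2\<in>linf_plus F. (\<forall>a\<in>F. \<phi>1 a \<le> \<phi>2 a) \<longrightarrow> f \<phi>1 \<le> f \<phi>2) \<and>
     (\<forall>M. \<exists>R. \<forall>\<phi>\<in>linf_plus F. sup_norm F \<phi> \<ge> R \<longrightarrow> f \<phi> \<ge> M)}"

definition r_f :: "(('a \<Rightarrow> real) \<Rightarrow> real) \<Rightarrow> 'a::real_normed_vector \<Rightarrow> 'a set \<Rightarrow> real" where
  "r_f f x F = f (\<lambda>a. if a \<in> F then norm (x - a) else 0)"

definition rad :: "'a::real_normed_vector set \<Rightarrow> (('a \<Rightarrow> real) \<Rightarrow> real) \<Rightarrow> 'a set \<Rightarrow> real" where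
  "rad V f F = (INF v\<in>V. r_f f v F)"

text \<open>weak-\<F>-SACP for the triplet (X, V, \<FF>), with X the ambient type and
  \<Phi> F the class of functions on ell_infty^+(F).\<close>
definition weak_SACP :: "'a::real_normed_vector set \<Rightarrow> 'a set set \<Rightarrow> ('a set \<Rightarrow> (('a \<Rightarrow> real) \<Rightarrow> real) set) \<Rightarrow> bool" where
  "weak_SACP V FF \<Phi> \<longleftrightarrow>
     (\<forall>F\<in>FF. \<forall>f\<in>\<Phi> F. \<forall>v :: nat \<Rightarrow> 'a. (\<forall>n. v n \<in> V) \<longrightarrow>
        (\<lambda>n. r_f f (v n) F) \<longlonglongrightarrow> rad V f F \<longrightarrow>
        (\<exists>s x. strict_mono s \<and> weakly_tendsto (v \<circ> s) x))"

end

theory Submission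
  imports Defs "HOL-Library.Diagonal_Subsequence"
begin

text \<open>The closed linear span \<open>S\<close> of the \<open>v n\<close> is separable, and
  Hahn--Banach provides functionals \<open>g k\<close> of norm at most one attaining the norm on a countable
  dense subset of \<open>S\<close>; a diagonal argument gives a subsequence along which every \<open>g k (v n)\<close>
  converges. Each weak cluster point of this subsequence lies in \<open>S\<close> (Hahn--Banach
  separation), and any two of them agree on every \<open>g k\<close>, so they coincide. Since weak
  compactness yields a cluster point along every infinite set of indices, the subsequence
  converges weakly to the unique one.\<close>

section \<open>Hahn--Banach for functionals dominated by the norm\<close>

text \<open>Partial functionals are handled through their graphs, so that the union of a chain of
  extensions is again one.\<close>
definition dominated_linear_graph :: "('a::real_normed_vector \<times> real) set \<Rightarrow> bool" where
  "dominated_linear_graph G \<longleftrightarrow> single_valued G \<and>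
     (\<forall>x a y b. (x, a) \<in> G \<longrightarrow> (y, b) \<in> G \<longrightarrow> (x + y, a + b) \<in> G) \<and>
     (\<forall>x a c. (x, a) \<in> G \<longrightarrow> (c *\<^sub>R x, c * a) \<in> G) \<and>
     (\<forall>x a. (x, a) \<in> G \<longrightarrow> a \<le> norm x)"

lemma dominated_linear_graphD:
  assumes "dominated_linear_graph G"
  shows dominated_linear_graph_unique: "(x, a) \<in> G \<Longrightarrow> (x, b) \<in> G \<Longrightarrow> a = b"
    and dominated_linear_graph_add: "(x, a) \<in> G \<Longrightarrow> (y, b) \<in> G \<Longrightarrow> (x + y, a + b) \<in> G"
    and dominated_linear_graph_scale: "(x, a) \<in> G \<Longrightarrow> (c *\<^sub>R x, c * a) \<in> G"
    and dominated_linear_graph_le_norm: "(x, a) \<in> G \<Longrightarrow> a \<le> norm x"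
  using assms unfolding dominated_linear_graph_def single_valued_def by blast+

text \<open>The value \<open>c\<close> prescribed at a new vector \<open>z\<close> must lie between \<open>b - \<parallel>s - z\<parallel>\<close>
  and \<open>\<parallel>s' + z\<parallel> - b'\<close>; this is possible because \<open>b + b' \<le> \<parallel>s + s'\<parallel>\<close>.\<close>
lemma dominated_linear_graph_extension_value:
  assumes G: "dominated_linear_graph G" and "G \<noteq> {}"
  obtains c where "\<And>s a. (s, a) \<in> G \<Longrightarrow> a - norm (s - z) \<le> c"
    and "\<And>s a. (s, a) \<in> G \<Longrightarrow> c \<le> norm (s + z) - a"
proof -
  define S where "S = {b - norm (s - z) | s b. (s, b) \<in> G}"
  have below: "b - norm (s - z) \<le> norm (s' + z) - b'" if "(s, b) \<in> G" "(s', b') \<in> G" for s b s' b'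
  proof -
    have "b + b' \<le> norm ((s - z) + (s' + z))"
      using dominated_linear_graph_le_norm[OF G dominated_linear_graph_add[OF G that]] by simp
    also have "\<dots> \<le> norm (s - z) + norm (s' + z)" by (rule norm_triangle_ineq)
    finally show ?thesis by simp
  qed
  have "S \<noteq> {}" using \<open>G \<noteq> {}\<close> unfolding S_def by auto
  moreover have "bdd_above S"
    using below \<open>G \<noteq> {}\<close> unfolding S_def bdd_above_def by fast
  ultimately show ?thesis
    using below by (intro that[of "Sup S"]) (auto intro!: cSup_upper cSup_least simp: S_def)
qed

lemma graph_extension_le_norm:
  assumes G: "dominated_linear_graph G" and tb: "(t, b) \<in> G"
    and lower: "\<And>s a. (s, a) \<in> G \<Longrightarrow> a - norm (s - z) \<le> c"
    and upper: "\<And>s a. (s, a) \<in> G \<Longrightarrow> c \<le> norm (s + z) - a"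
  shows "b + r * c \<le> norm (t + r *\<^sub>R z)"
proof -
  consider "r = 0" | "r > 0" | "r < 0" by linarith
  then show ?thesis
  proof cases
    case 1
    then show ?thesis using dominated_linear_graph_le_norm[OF G tb] by simp
  next
    case 2
    have "r * c \<le> r * (norm ((1 / r) *\<^sub>R t + z) - (1 / r) * b)"
      using upper[OF dominated_linear_graph_scale[OF G tb, of "1 / r"]] 2
      by (intro mult_left_mono) auto
    also have "\<dots> = norm (r *\<^sub>R ((1 / r) *\<^sub>R t + z)) - b"
      using 2 by (simp add: right_diff_distrib)
    also have "r *\<^sub>R ((1 / r) *\<^sub>R t + z) = t + r *\<^sub>R z"
      using 2 by (simp add: scaleR_add_right)
    finally show ?thesis by simp
  next
    case 3
    define X where "X = (- 1 / r) *\<^sub>R t - z"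
    have "b - norm ((- r) *\<^sub>R X) = - r * ((- 1 / r) * b - norm X)"
      using 3 by (simp add: algebra_simps)
    also have "\<dots> \<le> - r * c"
      using lower[OF dominated_linear_graph_scale[OF G tb, of "- 1 / r"]] 3
      unfolding X_def by (intro mult_left_mono) auto
    also have "(- r) *\<^sub>R X = t + r *\<^sub>R z"
      unfolding X_def using 3 by (simp add: scaleR_diff_right)
    finally show ?thesis by simp
  qed
qed

definition graph_extension :: "('a::real_vector \<times> real) set \<Rightarrow> 'a \<Rightarrow> real \<Rightarrow> ('a \<times> real) set" where
  "graph_extension G z c = {(t + r *\<^sub>R z, b + r * c) | t b r. (t, b) \<in> G}"

lemma graph_extensionI: "(t, b) \<in> G \<Longrightarrow> (t + r *\<^sub>R z, b + r * c) \<in> graph_extension G z c"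
  unfolding graph_extension_def by blast

lemma graph_extensionE:
  assumes "(x, a) \<in> graph_extension G z c"
  obtains t b r where "(t, b) \<in> G" "x = t + r *\<^sub>R z" "a = b + r * c"
  using assms unfolding graph_extension_def by blast

lemma dominated_linear_graph_graph_extension:
  assumes G: "dominated_linear_graph G" and z: "z \<notin> Domain G"
    and lower: "\<And>s a. (s, a) \<in> G \<Longrightarrow> a - norm (s - z) \<le> c"
    and upper: "\<And>s a. (s, a) \<in> G \<Longrightarrow> c \<le> norm (s + z) - a"
  shows "dominated_linear_graph (graph_extension G z c)"
  unfolding dominated_linear_graph_def single_valued_def
proof (intro conjI allI impI)
  fix x a a' assume "(x, a) \<in> graph_extension G z c" "(x, a') \<in> graph_extension G z c"
  then obtain t b r t' b' r' where tb: "(t, b) \<in> G" "(t', b') \<in> G"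
    and x: "x = t + r *\<^sub>R z" "x = t' + r' *\<^sub>R z" and "a = b + r * c" "a' = b' + r' * c"
    by (metis graph_extensionE)
  have "r = r'"
  proof (rule ccontr)
    assume "r \<noteq> r'"
    have "(t + (- 1) *\<^sub>R t', b + (- 1) * b') \<in> G"
      using dominated_linear_graph_add[OF G tb(1) dominated_linear_graph_scale[OF G tb(2)]] .
    from dominated_linear_graph_scale[OF G this, of "1 / (r' - r)"]
    have "((1 / (r' - r)) *\<^sub>R (t - t'), (1 / (r' - r)) * (b - b')) \<in> G" by simp
    moreover have "t - t' = (r' - r) *\<^sub>R z" using x by (simp add: algebra_simps)
    ultimately show False using z \<open>r \<noteq> r'\<close> by (auto intro: DomainI)
  qed
  with x have "t = t'" by simp
  with \<open>r = r'\<close> tb show "a = a'"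
    using dominated_linear_graph_unique[OF G] \<open>a = _\<close> \<open>a' = _\<close> by simp
next
  fix x a y b assume "(x, a) \<in> graph_extension G z c" "(y, b) \<in> graph_extension G z c"
  then obtain t1 b1 r1 t2 b2 r2 where "(t1, b1) \<in> G" "(t2, b2) \<in> G"
    "x = t1 + r1 *\<^sub>R z" "a = b1 + r1 * c" "y = t2 + r2 *\<^sub>R z" "b = b2 + r2 * c"
    by (metis graph_extensionE)
  then show "(x + y, a + b) \<in> graph_extension G z c"
    using graph_extensionI[OF dominated_linear_graph_add[OF G], of t1 b1 t2 b2 "r1 + r2"]
    by (simp add: algebra_simps)
next
  fix x a and s :: real assume "(x, a) \<in> graph_extension G z c"
  then obtain t b r where "(t, b) \<in> G" "x = t + r *\<^sub>R z" "a = b + r * c"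
    by (rule graph_extensionE)
  then show "(s *\<^sub>R x, s * a) \<in> graph_extension G z c"
    using graph_extensionI[OF dominated_linear_graph_scale[OF G], of t b s "s * r"]
    by (simp add: algebra_simps)
next
  fix x a assume "(x, a) \<in> graph_extension G z c"
  then show "a \<le> norm x"
    by (rule graph_extensionE) (simp add: graph_extension_le_norm[OF G _ lower upper])
qed

lemma dominated_linear_graph_extend:
  assumes G: "dominated_linear_graph G" and "G \<noteq> {}"
  obtains G' where "dominated_linear_graph G'" "G \<subseteq> G'" "z \<in> Domain G'"
proof (cases "z \<in> Domain G")
  case True
  with G show ?thesis by (intro that) auto
next
  case False
  obtain c where lower: "\<And>s a. (s, a) \<in> G \<Longrightarrow> a - norm (s - z) \<le> c"
    and upper: "\<And>s a. (s, a) \<in> G \<Longrightarrow> c \<le> norm (s + z) - a"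
    using dominated_linear_graph_extension_value[OF G \<open>G \<noteq> {}\<close>, of z] by blast
  have "G \<subseteq> graph_extension G z c"
    using graph_extensionI[of _ _ G 0] by auto
  moreover obtain x a where "(x, a) \<in> G" using \<open>G \<noteq> {}\<close> by auto
  then have "(0 + 1 *\<^sub>R z, 0 + 1 * c) \<in> graph_extension G z c"
    using dominated_linear_graph_scale[OF G, of x a 0] by (intro graph_extensionI) simp
  then have "z \<in> Domain (graph_extension G z c)" by auto
  ultimately show ?thesis
    using dominated_linear_graph_graph_extension[OF G False lower upper] that by blast
qed

lemma dominated_linear_graph_Union_chain:
  assumes chain: "chain\<^sub>\<subseteq> \<C>" and dom: "\<And>G. G \<in> \<C> \<Longrightarrow> dominated_linear_graph G"
  shows "dominated_linear_graph (\<Union>\<C>)"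
proof -
  have common: "\<exists>G\<in>\<C>. p \<in> G \<and> q \<in> G" if "p \<in> \<Union>\<C>" "q \<in> \<Union>\<C>" for p q
    using that chain unfolding chain_subset_def by blast
  show ?thesis
    unfolding dominated_linear_graph_def single_valued_def
  proof (intro conjI allI impI)
    fix x a b assume "(x, a) \<in> \<Union>\<C>" "(x, b) \<in> \<Union>\<C>"
    with common obtain G where "G \<in> \<C>" "(x, a) \<in> G" "(x, b) \<in> G" by blast
    then show "a = b" using dom dominated_linear_graph_unique by blast
  next
    fix x a y b assume "(x, a) \<in> \<Union>\<C>" "(y, b) \<in> \<Union>\<C>"
    with common obtain G where "G \<in> \<C>" "(x, a) \<in> G" "(y, b) \<in> G" by blast
    then show "(x + y, a + b) \<in> \<Union>\<C>" using dom dominated_linear_graph_add by blast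
  next
    fix x a c assume "(x, a) \<in> \<Union>\<C>"
    then obtain G where "G \<in> \<C>" "(x, a) \<in> G" by blast
    then show "(c *\<^sub>R x, c * a) \<in> \<Union>\<C>" using dom dominated_linear_graph_scale by blast
  next
    fix x a assume "(x, a) \<in> \<Union>\<C>"
    then obtain G where "G \<in> \<C>" "(x, a) \<in> G" by blast
    then show "a \<le> norm x" using dom dominated_linear_graph_le_norm by blast
  qed
qed

lemma total_dominated_linear_graph:
  assumes G0: "dominated_linear_graph G0" and "G0 \<noteq> {}"
  obtains M where "dominated_linear_graph M" "G0 \<subseteq> M" "Domain M = UNIV"
proof -
  define \<A> where "\<A> = {G. G0 \<subseteq> G \<and> dominated_linear_graph G}"
  have "\<exists>M\<in>\<A>. \<forall>G\<in>\<A>. M \<subseteq> G \<longrightarrow> G = M"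
  proof (rule Zorn_Lemma2, intro ballI)
    fix \<C> assume "\<C> \<in> chains \<A>"
    then have "\<C> \<subseteq> \<A>" "chain\<^sub>\<subseteq> \<C>" unfolding chains_def by auto
    show "\<exists>U\<in>\<A>. \<forall>G\<in>\<C>. G \<subseteq> U"
    proof (cases "\<C> = {}")
      case True
      with G0 show ?thesis unfolding \<A>_def by (intro bexI[of _ G0]) auto
    next
      case False
      with \<open>\<C> \<subseteq> \<A>\<close> \<open>chain\<^sub>\<subseteq> \<C>\<close> have "\<Union>\<C> \<in> \<A>"
        unfolding \<A>_def by (auto intro: dominated_linear_graph_Union_chain)
      then show ?thesis by (intro bexI[of _ "\<Union>\<C>"]) auto
    qed
  qed
  then obtain M where "M \<in> \<A>" and maximal: "\<And>G. G \<in> \<A> \<Longrightarrow> M \<subseteq> G \<Longrightarrow> G = M"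
    by blast
  then have M: "dominated_linear_graph M" and "G0 \<subseteq> M" unfolding \<A>_def by auto
  with \<open>G0 \<noteq> {}\<close> have "M \<noteq> {}" by blast
  have "x \<in> Domain M" for x
  proof -
    obtain G where G: "dominated_linear_graph G" "M \<subseteq> G" "x \<in> Domain G"
      by (rule dominated_linear_graph_extend[OF M \<open>M \<noteq> {}\<close>])
    with \<open>G0 \<subseteq> M\<close> have "G \<in> \<A>" unfolding \<A>_def by auto
    with G maximal show ?thesis by blast
  qed
  with M \<open>G0 \<subseteq> M\<close> show ?thesis by (intro that) auto
qed

lemma functional_of_total_dominated_linear_graph:
  assumes M: "dominated_linear_graph M" and total: "Domain M = UNIV"
  obtains L where "bounded_linear L" "\<And>x a. (x, a) \<in> M \<Longrightarrow> L x = a" "\<And>x. \<bar>L x\<bar> \<le> norm x"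
proof -
  from total have "\<forall>x. \<exists>a. (x, a) \<in> M" by auto
  then obtain L where "\<forall>x. (x, L x) \<in> M" by (rule choice[THEN exE])
  then have L: "(x, L x) \<in> M" for x by blast
  have L_eq: "L x = a" if "(x, a) \<in> M" for x a
    using dominated_linear_graph_unique[OF M L that] .
  have L_bound: "\<bar>L x\<bar> \<le> norm x" for x
    using dominated_linear_graph_le_norm[OF M L[of x]]
      dominated_linear_graph_le_norm[OF M dominated_linear_graph_scale[OF M L[of x], of "- 1"]]
    by simp
  have "bounded_linear L"
  proof (rule bounded_linear_intro[where K = 1])
    show "L (x + y) = L x + L y" for x y
      using L_eq[OF dominated_linear_graph_add[OF M L L]] .
    show "L (c *\<^sub>R x) = c *\<^sub>R L x" for c x
      using L_eq[OF dominated_linear_graph_scale[OF M L]] by simp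
    show "norm (L x) \<le> norm x * 1" for x
      using L_bound by simp
  qed
  with L_eq L_bound show ?thesis using that by blast
qed

theorem dominated_linear_graph_extends_to_functional:
  assumes "dominated_linear_graph G0" "G0 \<noteq> {}"
  obtains L where "bounded_linear L" "\<And>x a. (x, a) \<in> G0 \<Longrightarrow> L x = a" "\<And>x. \<bar>L x\<bar> \<le> norm x"
proof -
  obtain M where M: "dominated_linear_graph M" "G0 \<subseteq> M" "Domain M = UNIV"
    by (rule total_dominated_linear_graph[OF assms])
  obtain L where "bounded_linear L" "\<And>x a. (x, a) \<in> M \<Longrightarrow> L x = a" "\<And>x. \<bar>L x\<bar> \<le> norm x"
    using functional_of_total_dominated_linear_graph[OF M(1,3)] by blast
  with M(2) show ?thesis by (intro that) auto
qed

lemma dominated_linear_graph_zero_on_subspace: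
  assumes "subspace Y"
  shows "dominated_linear_graph (Y \<times> {0})"
  using assms unfolding dominated_linear_graph_def single_valued_def
  by (auto simp: subspace_add subspace_scale)

lemma distance_functional:
  fixes z :: "'a::real_normed_vector"
  assumes Y: "subspace Y"
  obtains L where "bounded_linear L" "\<And>y. y \<in> Y \<Longrightarrow> L y = 0" "L z = infdist z Y"
    "\<And>x. \<bar>L x\<bar> \<le> norm x"
proof (cases "z \<in> Y")
  case True
  then show ?thesis by (intro that[of "\<lambda>_. 0"]) auto
next
  case False
  define G where "G = graph_extension (Y \<times> {0}) z (infdist z Y)"
  have "dominated_linear_graph G"
    unfolding G_def
  proof (rule dominated_linear_graph_graph_extension)
    show "dominated_linear_graph (Y \<times> {0})"
      using Y by (rule dominated_linear_graph_zero_on_subspace)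
    show "z \<notin> Domain (Y \<times> {0})" using False by auto
    show "a - norm (s - z) \<le> infdist z Y" if "(s, a) \<in> Y \<times> {0}" for s a
    proof -
      from that have "a = 0" by simp
      with infdist_nonneg[of z Y] norm_ge_zero[of "s - z"] show ?thesis by linarith
    qed
    show "infdist z Y \<le> norm (s + z) - a" if "(s, a) \<in> Y \<times> {0}" for s a
    proof -
      have "- s \<in> Y" using that Y by (auto simp: subspace_neg)
      then have "infdist z Y \<le> dist z (- s)" by (rule infdist_le)
      with that show ?thesis by (simp add: dist_norm add.commute)
    qed
  qed
  moreover have on_Y: "(y, 0) \<in> G" if "y \<in> Y" for y
    using graph_extensionI[of y 0 "Y \<times> {0}" 0 z "infdist z Y"] that unfolding G_def by simp
  then have "G \<noteq> {}" using subspace_0[OF Y] by blast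
  ultimately obtain L where L: "bounded_linear L" "\<And>x a. (x, a) \<in> G \<Longrightarrow> L x = a"
    "\<And>x. \<bar>L x\<bar> \<le> norm x"
    using dominated_linear_graph_extends_to_functional by blast
  have "(z, infdist z Y) \<in> G"
    using graph_extensionI[of 0 0 "Y \<times> {0}" 1 z "infdist z Y"] subspace_0[OF Y]
    unfolding G_def by simp
  with L on_Y show ?thesis by (intro that[of L]) auto
qed

lemma norming_functional:
  fixes q :: "'a::real_normed_vector"
  obtains g where "bounded_linear g" "g q = norm q" "\<And>x. \<bar>g x\<bar> \<le> norm x"
proof -
  obtain g where "bounded_linear g" "\<And>y. y \<in> {0} \<Longrightarrow> g y = 0" "g q = infdist q {0}"
    "\<And>x. \<bar>g x\<bar> \<le> norm x"
    using distance_functional[OF subspace_single_0, of q] by blast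
  then show ?thesis using that by simp
qed

lemma separating_functional:
  fixes z :: "'a::real_normed_vector"
  assumes "subspace Y" "closed Y" "z \<notin> Y"
  obtains L :: "'a \<Rightarrow> real" where "bounded_linear L" "\<And>y. y \<in> Y \<Longrightarrow> L y = 0" "L z \<noteq> 0"
proof -
  have "Y \<noteq> {}" using subspace_0[OF assms(1)] by blast
  then have "infdist z Y \<noteq> 0" using assms(2,3) in_closed_iff_infdist_zero by blast
  moreover obtain L where "bounded_linear L" "\<And>y. y \<in> Y \<Longrightarrow> L y = 0" "L z = infdist z Y"
    "\<And>x. \<bar>L x\<bar> \<le> norm x"
    using distance_functional[OF assms(1), of z] by blast
  ultimately show ?thesis by (intro that[of L]) auto
qed

lemma countable_norming_family:
  fixes Q :: "'a::real_normed_vector set"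
  assumes "countable Q"
  obtains g :: "nat \<Rightarrow> 'a \<Rightarrow> real"
  where "\<And>k. bounded_linear (g k)" "\<And>k x. \<bar>g k x\<bar> \<le> norm x"
    and "\<And>q. q \<in> Q \<Longrightarrow> \<exists>k. g k q = norm q"
proof -
  have "\<forall>k. \<exists>g. bounded_linear g \<and> (\<forall>x. \<bar>g x\<bar> \<le> norm x) \<and>
                 g (from_nat_into Q k) = norm (from_nat_into Q k)"
    using norming_functional by blast
  then obtain g where g: "\<forall>k. bounded_linear (g k) \<and> (\<forall>x. \<bar>g k x\<bar> \<le> norm x) \<and>
                 g k (from_nat_into Q k) = norm (from_nat_into Q k)"
    by (rule choice[THEN exE])
  have "\<exists>k. g k q = norm q" if "q \<in> Q" for q
    using from_nat_into_surj[OF assms that] g by metis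
  with g show ?thesis by (intro that[of g]) auto
qed

section \<open>Weak topology and weak cluster points\<close>

lemma openin_weak_topology_vimage:
  fixes l :: "'a::real_normed_vector \<Rightarrow> real"
  assumes "bounded_linear l" "open U"
  shows "openin weak_topology {x. l x \<in> U}"
  unfolding weak_topology_def using assms by (intro topology_generated_by_Basis) blast

lemma topspace_weak_topology [simp]: "topspace weak_topology = UNIV"
  unfolding weak_topology_def topology_generated_by_topspace
  using bounded_linear_zero by blast

lemma continuous_map_weak_topology:
  fixes l :: "'a::real_normed_vector \<Rightarrow> real"
  assumes "bounded_linear l"
  shows "continuous_map weak_topology euclideanreal l"
  unfolding continuous_map_def using openin_weak_topology_vimage[OF assms] by simp

lemma weakly_compact_imp_bounded_image:
  fixes l :: "'a::real_normed_vector \<Rightarrow> real"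
  assumes "weakly_compact C" "bounded_linear l"
  shows "bounded (l ` C)"
  using image_compactin[OF assms(1)[unfolded weakly_compact_def]
      continuous_map_weak_topology[OF assms(2)]]
  by (simp add: compact_imp_bounded)

text \<open>Only one functional is tested at a time: this is weaker than being a cluster point for
  the weak topology, but it is all the argument needs.\<close>
definition weak_cluster_point :: "nat set \<Rightarrow> (nat \<Rightarrow> 'a::real_normed_vector) \<Rightarrow> 'a \<Rightarrow> bool" where
  "weak_cluster_point I w y \<longleftrightarrow>
     (\<forall>l :: 'a \<Rightarrow> real. bounded_linear l \<longrightarrow> (\<forall>\<epsilon>>0. \<forall>N. \<exists>n\<in>I. N \<le> n \<and> \<bar>l (w n) - l y\<bar> < \<epsilon>))"

lemma weakly_compact_weak_cluster_point:
  assumes C: "weakly_compact C" "\<And>n. w n \<in> C" and "infinite I"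
  obtains y where "y \<in> C" "weak_cluster_point I w y"
proof -
  \<comment> \<open>Without a cluster point the increasing open sets \<open>V N\<close> cover \<open>C\<close>, so one of them does.\<close>
  define V where "V N = \<Union>{U. openin weak_topology U \<and> (\<forall>n\<in>I. N \<le> n \<longrightarrow> w n \<notin> U)}" for N
  have "\<exists>y\<in>C. weak_cluster_point I w y"
  proof (rule ccontr)
    assume no_cluster: "\<not> ?thesis"
    have "C \<subseteq> \<Union>(range V)"
    proof
      fix y assume "y \<in> C"
      with no_cluster obtain l :: "'a \<Rightarrow> real" and \<epsilon> N where
        "bounded_linear l" "\<epsilon> > 0" "\<forall>n\<in>I. N \<le> n \<longrightarrow> \<not> \<bar>l (w n) - l y\<bar> < \<epsilon>"
        unfolding weak_cluster_point_def by blast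
      then have "openin weak_topology {x. l x \<in> ball (l y) \<epsilon>}"
        by (intro openin_weak_topology_vimage) auto
      moreover have "\<forall>n\<in>I. N \<le> n \<longrightarrow> w n \<notin> {x. l x \<in> ball (l y) \<epsilon>}"
        using \<open>\<forall>n\<in>I. N \<le> n \<longrightarrow> \<not> \<bar>l (w n) - l y\<bar> < \<epsilon>\<close>
        by (simp add: dist_real_def abs_minus_commute)
      moreover have "y \<in> {x. l x \<in> ball (l y) \<epsilon>}" using \<open>\<epsilon> > 0\<close> by simp
      ultimately show "y \<in> \<Union>(range V)" unfolding V_def by blast
    qed
    moreover have "\<forall>U\<in>range V. openin weak_topology U"
      unfolding V_def by blast
    ultimately obtain \<F> where \<F>: "finite \<F>" "\<F> \<subseteq> range V" "C \<subseteq> \<Union>\<F>"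
      using C(1) unfolding weakly_compact_def compactin_def by meson
    from finite_subset_image[OF \<F>(1,2)] obtain K where "finite K" "\<F> = V ` K" by blast
    with \<F>(3) have "finite K" "C \<subseteq> \<Union>(V ` K)" by auto
    moreover have "V k \<subseteq> V (\<Sum>K)" if "k \<in> K" for k
      using member_le_sum[OF that _ \<open>finite K\<close>, of id] unfolding V_def by fastforce
    ultimately have "C \<subseteq> V (\<Sum>K)" by blast
    moreover obtain n where "n \<in> I" "\<Sum>K \<le> n"
      using \<open>infinite I\<close> infinite_nat_iff_unbounded_le by blast
    ultimately show False using C(2)[of n] unfolding V_def by blast
  qed
  then show ?thesis using that by blast
qed

lemma weak_cluster_point_limit:
  fixes l :: "'a::real_normed_vector \<Rightarrow> real"
  assumes y: "weak_cluster_point I w y" and l: "bounded_linear l" and lim: "(\<lambda>n. l (w n)) \<longlonglongrightarrow> L"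
  shows "l y = L"
proof (rule ccontr)
  assume "l y \<noteq> L"
  define \<epsilon> where "\<epsilon> = \<bar>l y - L\<bar> / 2"
  have "\<epsilon> > 0" using \<open>l y \<noteq> L\<close> unfolding \<epsilon>_def by simp
  then obtain N where N: "\<And>n. N \<le> n \<Longrightarrow> \<bar>l (w n) - L\<bar> < \<epsilon>"
    using lim unfolding LIMSEQ_def dist_real_def by blast
  obtain n where "N \<le> n" and "\<bar>l (w n) - l y\<bar> < \<epsilon>"
    using y l \<open>\<epsilon> > 0\<close> unfolding weak_cluster_point_def by blast
  moreover have "\<bar>l (w n) - L\<bar> < \<epsilon>" using N \<open>N \<le> n\<close> by blast
  moreover have "\<bar>l y - L\<bar> \<le> \<bar>l (w n) - L\<bar> + \<bar>l (w n) - l y\<bar>"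
    using abs_triangle_ineq4[of "l (w n) - L" "l (w n) - l y"] by simp
  ultimately show False unfolding \<epsilon>_def by argo
qed

lemma weak_cluster_point_in_closed_subspace:
  assumes y: "weak_cluster_point I w y" and S: "subspace S" "closed S" and w: "\<And>n. w n \<in> S"
  shows "y \<in> S"
proof (rule ccontr)
  assume "y \<notin> S"
  then obtain h :: "'a \<Rightarrow> real" where h: "bounded_linear h" "\<And>x. x \<in> S \<Longrightarrow> h x = 0" "h y \<noteq> 0"
    using separating_functional[OF S] by blast
  have "(\<lambda>n. h (w n)) \<longlonglongrightarrow> 0" using h(2)[OF w] by simp
  with h(1,3) show False using weak_cluster_point_limit[OF y] by blast
qed

lemma weakly_tendsto_if_unique_weak_cluster_point:
  assumes C: "weakly_compact C" "\<And>n. w n \<in> C"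
    and unique: "\<And>I y. infinite I \<Longrightarrow> weak_cluster_point I w y \<Longrightarrow> y = x"
  shows "weakly_tendsto w x"
  unfolding weakly_tendsto_def
proof (intro allI impI)
  fix l :: "'a \<Rightarrow> real" assume l: "bounded_linear l"
  show "(\<lambda>n. l (w n)) \<longlonglongrightarrow> l x"
  proof (rule ccontr)
    assume "\<not> ?thesis"
    then obtain \<epsilon> where "\<epsilon> > 0" and often: "\<forall>N. \<exists>n\<ge>N. \<not> \<bar>l (w n) - l x\<bar> < \<epsilon>"
      unfolding LIMSEQ_iff real_norm_def by blast
    define I where "I = {n. \<epsilon> \<le> \<bar>l (w n) - l x\<bar>}"
    have "infinite I"
      unfolding I_def infinite_nat_iff_unbounded_le using often by (simp add: not_less)
    then obtain y where "y \<in> C" "weak_cluster_point I w y"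
      by (rule weakly_compact_weak_cluster_point[OF C])
    then have "weak_cluster_point I w x" using unique[OF \<open>infinite I\<close>] by simp
    then obtain n where "n \<in> I" "\<bar>l (w n) - l x\<bar> < \<epsilon>"
      using l \<open>\<epsilon> > 0\<close> unfolding weak_cluster_point_def by fast
    then show False unfolding I_def by simp
  qed
qed

section \<open>Weakly compact sets are weakly sequentially compact\<close>

lemma subspace_closure_of_rational_subspace:
  fixes S :: "'a::real_normed_vector set"
  assumes zero: "0 \<in> S" and add: "\<And>x y. x \<in> S \<Longrightarrow> y \<in> S \<Longrightarrow> x + y \<in> S"
    and scale: "\<And>q x. q \<in> \<rat> \<Longrightarrow> x \<in> S \<Longrightarrow> q *\<^sub>R x \<in> S"
  shows "subspace (closure S)"
proof (rule subspaceI)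
  show "0 \<in> closure S" using zero closure_subset by blast
next
  fix x y assume "x \<in> closure S" "y \<in> closure S"
  then obtain a b where "\<forall>n. a n \<in> S" "a \<longlonglongrightarrow> x" "\<forall>n. b n \<in> S" "b \<longlonglongrightarrow> y"
    unfolding closure_sequential by blast
  then have "\<forall>n. a n + b n \<in> S" "(\<lambda>n. a n + b n) \<longlonglongrightarrow> x + y"
    using add by (auto intro: tendsto_add)
  then show "x + y \<in> closure S"
    unfolding closure_sequential by (intro exI[of _ "\<lambda>n. a n + b n"]) simp
next
  fix c :: real and x assume "x \<in> closure S"
  then obtain a where "\<forall>n. a n \<in> S" "a \<longlonglongrightarrow> x"
    unfolding closure_sequential by blast
  moreover obtain q where "\<forall>n. q n \<in> \<rat>" "q \<longlonglongrightarrow> c"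
    using Rats_closure_real closure_sequential by blast
  ultimately have "\<forall>n. q n *\<^sub>R a n \<in> S" "(\<lambda>n. q n *\<^sub>R a n) \<longlonglongrightarrow> c *\<^sub>R x"
    using scale by (auto intro: tendsto_scaleR)
  then show "c *\<^sub>R x \<in> closure S"
    unfolding closure_sequential by (intro exI[of _ "\<lambda>n. q n *\<^sub>R a n"]) simp
qed

definition rational_span :: "'a::real_vector set \<Rightarrow> 'a set" where
  "rational_span A = sum_list ` lists {real_of_rat r *\<^sub>R a | r a. a \<in> A}"

lemma countable_rational_span:
  assumes "countable A"
  shows "countable (rational_span A)"
proof -
  have "{real_of_rat r *\<^sub>R a | r a. a \<in> A} = (\<lambda>(r, a). real_of_rat r *\<^sub>R a) ` (UNIV \<times> A)"
    by auto
  then show ?thesis unfolding rational_span_def using assms by simp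
qed

lemma rational_span_superset: "A \<subseteq> rational_span A"
proof
  fix a assume "a \<in> A"
  moreover have "a = real_of_rat 1 *\<^sub>R a" by simp
  ultimately have "a \<in> {real_of_rat r *\<^sub>R a | r a. a \<in> A}" by blast
  then show "a \<in> rational_span A"
    unfolding rational_span_def by (intro image_eqI[of _ _ "[a]"]) auto
qed

lemma subspace_closure_rational_span:
  fixes A :: "'a::real_normed_vector set"
  shows "subspace (closure (rational_span A))"
proof (rule subspace_closure_of_rational_subspace)
  let ?M = "{real_of_rat r *\<^sub>R a | r a. a \<in> A}"
  show "0 \<in> rational_span A" unfolding rational_span_def by (force intro: image_eqI[of _ _ "[]"])
  show "x + y \<in> rational_span A" if "x \<in> rational_span A" "y \<in> rational_span A" for x y
    using that unfolding rational_span_def by (force intro: image_eqI[of _ _ "_ @ _"])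
  show "q *\<^sub>R x \<in> rational_span A" if "q \<in> \<rat>" "x \<in> rational_span A" for q x
  proof -
    obtain q' where q: "q = real_of_rat q'" using \<open>q \<in> \<rat>\<close> by (blast elim: Rats_cases)
    obtain xs where xs: "xs \<in> lists ?M" "x = sum_list xs"
      using \<open>x \<in> rational_span A\<close> unfolding rational_span_def by blast
    have "q *\<^sub>R m \<in> ?M" if "m \<in> ?M" for m
    proof -
      from that obtain r a where "m = real_of_rat r *\<^sub>R a" "a \<in> A" by blast
      then have "q *\<^sub>R m = real_of_rat (q' * r) *\<^sub>R a" by (simp add: q of_rat_mult)
      with \<open>a \<in> A\<close> show ?thesis by blast
    qed
    then have "map (scaleR q) xs \<in> lists ?M" using xs(1) by auto
    moreover have "q *\<^sub>R x = sum_list (map (scaleR q) xs)"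
      unfolding xs(2) by (induction xs) (simp_all add: scaleR_add_right)
    ultimately show ?thesis unfolding rational_span_def by blast
  qed
qed

lemma diagonal_subsequence_convergent:
  fixes f :: "nat \<Rightarrow> nat \<Rightarrow> real"
  assumes "\<And>k. bounded (range (f k))"
  obtains \<sigma> where "strict_mono \<sigma>" "\<And>k. convergent (\<lambda>n. f k (\<sigma> n))"
proof -
  interpret subseqs "\<lambda>k r. convergent (\<lambda>n. f k (r n))"
  proof
    fix k and s :: "nat \<Rightarrow> nat" assume "strict_mono s"
    have "bounded (range (\<lambda>n. f k (s n)))"
      using assms[of k] by (rule bounded_subset) auto
    then obtain l r where "strict_mono r" "((\<lambda>n. f k (s n)) \<circ> r) \<longlonglongrightarrow> l"
      using bounded_imp_convergent_subsequence by blast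
    then show "\<exists>r. strict_mono r \<and> convergent (\<lambda>n. f k ((s \<circ> r) n))"
      by (auto simp: convergent_def o_def)
  qed
  have "convergent (\<lambda>n. f k (diagseq n))" for k
  proof -
    have "convergent (\<lambda>n. f k ((diagseq \<circ> (+) (Suc k)) n))"
      by (rule diagseq_holds) (auto simp: o_def dest: convergent_subseq_convergent)
    then show ?thesis
      using convergent_ignore_initial_segment[of "\<lambda>n. f k (diagseq n)" "Suc k"]
      by (simp add: o_def add.commute)
  qed
  with subseq_diagseq show ?thesis by (rule that)
qed

lemma norming_family_eq_zero:
  fixes g :: "nat \<Rightarrow> 'a::real_normed_vector \<Rightarrow> real"
  assumes z: "z \<in> closure Q" "\<And>k. g k z = 0"
    and norming: "\<And>q. q \<in> Q \<Longrightarrow> \<exists>k. g k q = norm q"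
    and g: "\<And>k. linear (g k)" "\<And>k x. \<bar>g k x\<bar> \<le> norm x"
  shows "z = 0"
proof (rule ccontr)
  assume "z \<noteq> 0"
  then obtain q where "q \<in> Q" and close: "norm (z - q) < norm z / 2"
    using z(1) unfolding closure_approachable dist_norm
    by (metis half_gt_zero norm_minus_commute zero_less_norm_iff)
  then obtain k where "g k q = norm q" using norming by blast
  then have "norm q = g k (q - z)" using z(2) linear_diff[OF g(1)] by simp
  also have "\<dots> \<le> norm (z - q)" using g(2)[of k "q - z"] by (simp add: norm_minus_commute)
  finally have "norm q < norm z / 2" using close by linarith
  moreover have "norm z \<le> norm q + norm (z - q)" by (rule norm_triangle_sub)
  ultimately show False using close by linarith
qed

lemma weak_cluster_points_eq:
  fixes g :: "nat \<Rightarrow> 'a::real_normed_vector \<Rightarrow> real"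
  assumes S: "subspace (closure Q)" and w: "\<And>n. w n \<in> closure Q"
    and norming: "\<And>q. q \<in> Q \<Longrightarrow> \<exists>k. g k q = norm q"
    and g: "\<And>k. bounded_linear (g k)" "\<And>k x. \<bar>g k x\<bar> \<le> norm x"
    and conv: "\<And>k. convergent (\<lambda>n. g k (w n))"
    and x: "weak_cluster_point I w x" and y: "weak_cluster_point J w y"
  shows "x = y"
proof -
  have "x \<in> closure Q" "y \<in> closure Q"
    using weak_cluster_point_in_closed_subspace[OF x S closed_closure w]
      weak_cluster_point_in_closed_subspace[OF y S closed_closure w] .
  then have "x - y \<in> closure Q" by (rule subspace_diff[OF S])
  moreover have "g k (x - y) = 0" for k
  proof -
    obtain L where "(\<lambda>n. g k (w n)) \<longlonglongrightarrow> L" using conv[of k] unfolding convergent_def by blast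
    then have "g k x = g k y"
      using weak_cluster_point_limit[OF x g(1)] weak_cluster_point_limit[OF y g(1)] by simp
    then show ?thesis using linear_diff[OF bounded_linear.linear[OF g(1)]] by simp
  qed
  ultimately have "x - y = 0"
    by (rule norming_family_eq_zero[OF _ _ norming bounded_linear.linear[OF g(1)] g(2)])
  then show ?thesis by simp
qed

theorem weakly_compact_imp_weakly_convergent_subsequence:
  fixes C :: "'a::real_normed_vector set" and v :: "nat \<Rightarrow> 'a"
  assumes C: "weakly_compact C" and v: "\<And>n. v n \<in> C"
  shows "\<exists>\<sigma> x. strict_mono \<sigma> \<and> weakly_tendsto (v \<circ> \<sigma>) x"
proof -
  define Q where "Q = rational_span (range v)"
  have "countable Q" unfolding Q_def by (intro countable_rational_span countable_image) simp
  obtain g :: "nat \<Rightarrow> 'a \<Rightarrow> real"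
    where g: "\<And>k. bounded_linear (g k)" "\<And>k x. \<bar>g k x\<bar> \<le> norm x"
      and norming: "\<And>q. q \<in> Q \<Longrightarrow> \<exists>k. g k q = norm q"
    using countable_norming_family[OF \<open>countable Q\<close>] by blast
  have bdd: "bounded (range (\<lambda>n. g k (v n)))" for k
    by (rule bounded_subset[OF weakly_compact_imp_bounded_image[OF C g(1)]]) (use v in auto)
  obtain \<sigma> where \<sigma>: "strict_mono \<sigma>" and conv: "\<And>k. convergent (\<lambda>n. g k (v (\<sigma> n)))"
    using diagonal_subsequence_convergent[of "\<lambda>k n. g k (v n)", OF bdd] by blast
  define w where "w = v \<circ> \<sigma>"
  have w_C: "w n \<in> C" for n unfolding w_def using v by simp
  have w_Q: "w n \<in> closure Q" for n
  proof -
    have "w n \<in> Q" unfolding w_def Q_def by (rule subsetD[OF rational_span_superset]) simp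
    then show ?thesis using closure_subset by blast
  qed
  have w_conv: "convergent (\<lambda>n. g k (w n))" for k using conv by (simp add: w_def)
  have Q: "subspace (closure Q)" unfolding Q_def by (rule subspace_closure_rational_span)
  obtain x where "x \<in> C" "weak_cluster_point UNIV w x"
    by (rule weakly_compact_weak_cluster_point[OF C w_C infinite_UNIV_nat])
  then have "weakly_tendsto w x"
    using weakly_tendsto_if_unique_weak_cluster_point[where w = w, OF C w_C]
      weak_cluster_points_eq[where w = w and g = g, OF Q w_Q norming g w_conv] by blast
  with \<sigma> show ?thesis unfolding w_def by blast
qed

theorem corollary2p4:
  fixes C :: "'a::banach set"
  assumes "weakly_compact C"
  shows "weak_SACP C CB F_cmc"
  unfolding weak_SACP_def
proof (intro ballI allI impI)
  fix F f and v :: "nat \<Rightarrow> 'a"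
  assume "\<forall>n. v n \<in> C"
  then show "\<exists>s x. strict_mono s \<and> weakly_tendsto (v \<circ> s) x"
    using weakly_compact_imp_weakly_convergent_subsequence[OF assms] by blast
qed

end
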